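(* Let $\mathfrak g=\mathfrak k\oplus\mathfrak m$ be a Pauli-spanned Cartan decomposition and let $b_1,b_2,b_3\in\tilde{\mathfrak m}$ be pairwise commuting Pauli strings. If $\tilde{\mathfrak k}^{123}$ is non-empty, then the (Hermitian) Pauli string $b_1b_2b_3$ satisfies $i\,b_1b_2b_3\in\mathfrak m$.
   Context: Pauli strings on $n$ qubits are tensor products of $I,X,Y,Z$, not all identity; two Pauli strings either commute or anticommute. A Pauli-spanned Cartan decomposition is $\mathfrak g=\mathfrak k\oplus\mathfrak m\subseteq\mathfrak{su}(2^n)$ with $\mathfrak k=\mathrm{span}_{i\mathbb R}\tilde{\mathfrak k}$, $\mathfrak m=\mathrm{span}_{i\mathbb R}\tilde{\mathfrak m}$, where $\tilde{\mathfrak k}\sqcup\tilde{\mathfrak m}$ is the set of all Pauli strings (up to phase) $\sigma$ with $i\sigma\in\mathfrak g$, and $[\mathfrak k,\mathfrak k]\subseteq\mathfrak k$, $[\mathfrak m,\mathfrak m]\subseteq\mathfrak k$, $[\mathfrak k,\mathfrak m]\subseteq\mathfrak m$. $\tilde{\mathfrak k}^{123}$ is the set of $k\in\tilde{\mathfrak k}$ anticommuting with each of $b_1,b_2,b_3$. *)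

theory Defs
  imports Complex_Main
begin

text \<open>Matrices are represented as entry functions nat => nat => complex;
  an n-qubit operator is a 2^n x 2^n matrix, all entries outside the index
  range 0..2^n-1 being zero.\<close>

type_synonym cmat = "nat \<Rightarrow> nat \<Rightarrow> complex"

datatype pauli = PI | PX | PY | PZ

definition pmat :: "pauli \<Rightarrow> cmat" where
  "pmat p = (\<lambda>i j. if i < 2 \<and> j < 2 then
      (case p of
         PI \<Rightarrow> (if i = j then 1 else 0)
       | PX \<Rightarrow> (if i \<noteq> j then 1 else 0)
       | PY \<Rightarrow> (if i = 0 \<and> j = 1 then - \<i> else if i = 1 \<and> j = 0 then \<i> else 0)
       | PZ \<Rightarrow> (if i = j then (if i = 0 then 1 else -1) else 0))
    else 0)"

definition kron :: "nat \<Rightarrow> cmat \<Rightarrow> cmat \<Rightarrow> cmat" where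
  "kron m A B = (\<lambda>i j. A (i div m) (j div m) * B (i mod m) (j mod m))"

fun pstr_mat :: "pauli list \<Rightarrow> cmat" where
  "pstr_mat [] = (\<lambda>i j. if i = 0 \<and> j = 0 then 1 else 0)"
| "pstr_mat (p # ps) = kron (2 ^ length ps) (pmat p) (pstr_mat ps)"

definition pauli_string :: "nat \<Rightarrow> pauli list \<Rightarrow> bool" where
  "pauli_string n ps \<longleftrightarrow> length ps = n \<and> (\<exists>p\<in>set ps. p \<noteq> PI)"

definition mmul :: "nat \<Rightarrow> cmat \<Rightarrow> cmat \<Rightarrow> cmat" where
  "mmul n A B = (\<lambda>i j. \<Sum>k<2 ^ n. A i k * B k j)"

definition msmul :: "complex \<Rightarrow> cmat \<Rightarrow> cmat" where
  "msmul c A = (\<lambda>i j. c * A i j)"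

definition mbracket :: "nat \<Rightarrow> cmat \<Rightarrow> cmat \<Rightarrow> cmat" where
  "mbracket n A B = (\<lambda>i j. mmul n A B i j - mmul n B A i j)"

definition rspan :: "cmat set \<Rightarrow> cmat set" where
  "rspan S = {A. \<exists>F c. finite F \<and> F \<subseteq> S \<and>
      (\<forall>i j. A i j = (\<Sum>B\<in>F. complex_of_real (c B) * B i j))}"

definition ispan :: "pauli list set \<Rightarrow> cmat set" where
  "ispan P = rspan ((\<lambda>\<sigma>. msmul \<i> (pstr_mat \<sigma>)) ` P)"

text \<open>Pauli-spanned Cartan decomposition g = k (+) m with k = span_iR K, m = span_iR M,
  K and M disjoint sets of Pauli strings on n qubits.\<close>
definition pauli_cartan :: "nat \<Rightarrow> pauli list set \<Rightarrow> pauli list set \<Rightarrow> bool" where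
  "pauli_cartan n K M \<longleftrightarrow>
     (\<forall>\<sigma>\<in>K \<union> M. pauli_string n \<sigma>) \<and> K \<inter> M = {} \<and>
     (\<forall>A\<in>ispan K. \<forall>B\<in>ispan K. mbracket n A B \<in> ispan K) \<and>
     (\<forall>A\<in>ispan M. \<forall>B\<in>ispan M. mbracket n A B \<in> ispan K) \<and>
     (\<forall>A\<in>ispan K. \<forall>B\<in>ispan M. mbracket n A B \<in> ispan M)"

definition pcommute :: "nat \<Rightarrow> pauli list \<Rightarrow> pauli list \<Rightarrow> bool" where
  "pcommute n a b \<longleftrightarrow> mmul n (pstr_mat a) (pstr_mat b) = mmul n (pstr_mat b) (pstr_mat a)"

definition panticommute :: "nat \<Rightarrow> pauli list \<Rightarrow> pauli list \<Rightarrow> bool" where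
  "panticommute n a b \<longleftrightarrow>
     mmul n (pstr_mat a) (pstr_mat b) = msmul (-1) (mmul n (pstr_mat b) (pstr_mat a))"

definition k123 :: "nat \<Rightarrow> pauli list set \<Rightarrow> pauli list \<Rightarrow> pauli list \<Rightarrow> pauli list \<Rightarrow> pauli list set" where
  "k123 n K b1 b2 b3 = {k\<in>K. panticommute n k b1 \<and> panticommute n k b2 \<and> panticommute n k b3}"

end

theory Submission
  imports Defs
begin

text \<open>Take \<open>k\<close> in k^123. Since \<open>k\<close> anticommutes with each \<open>b\<^sub>j\<close> and the \<open>b\<^sub>j\<close> commute,
  each of \<open>k b\<^sub>1\<close>, \<open>k b\<^sub>1 b\<^sub>2\<close> anticommutes with the next factor \<open>b\<^sub>j\<close>, so bracketing
  with \<open>i b\<^sub>j\<close> just multiplies by it (up to a scalar). The Cartan relations place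
  \<open>k b\<^sub>1\<close>, \<open>k b\<^sub>1 b\<^sub>2\<close>, \<open>k b\<^sub>1 b\<^sub>2 b\<^sub>3\<close> alternately in m, k, m. Finally \<open>k\<close> anticommutes
  with \<open>k b\<^sub>1 b\<^sub>2 b\<^sub>3\<close> (three sign changes), and bracketing with \<open>i k\<close> yields
  \<open>k\<^sup>2 b\<^sub>1 b\<^sub>2 b\<^sub>3 = b\<^sub>1 b\<^sub>2 b\<^sub>3\<close> in m.\<close>

lemma mmul_assoc: "mmul n (mmul n A B) C = mmul n A (mmul n B C)"
proof (intro ext)
  fix i j
  have "(\<Sum>k<2^n. (\<Sum>l<2^n. A i l * B l k) * C k j) = (\<Sum>k<2^n. \<Sum>l<2^n. A i l * B l k * C k j)"
    by (simp add: sum_distrib_right)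
  also have "\<dots> = (\<Sum>l<2^n. \<Sum>k<2^n. A i l * B l k * C k j)"
    by (rule sum.swap)
  also have "\<dots> = (\<Sum>l<2^n. A i l * (\<Sum>k<2^n. B l k * C k j))"
    by (simp add: sum_distrib_left mult.assoc)
  finally show "mmul n (mmul n A B) C i j = mmul n A (mmul n B C) i j"
    unfolding mmul_def .
qed

lemma mmul_msmul_left: "mmul n (msmul c A) B = msmul c (mmul n A B)"
  unfolding mmul_def msmul_def by (simp add: sum_distrib_left mult.assoc)

lemma mmul_msmul_right: "mmul n A (msmul c B) = msmul c (mmul n A B)"
  unfolding mmul_def msmul_def by (simp add: sum_distrib_left mult.left_commute)

lemma msmul_msmul: "msmul a (msmul b A) = msmul (a * b) A"
  unfolding msmul_def by (simp add: mult.assoc)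

lemma msmul_one [simp]: "msmul 1 A = A"
  unfolding msmul_def by simp

definition mident :: "nat \<Rightarrow> cmat" where
  "mident n = (\<lambda>i j. if i = j \<and> i < 2 ^ n then 1 else 0)"

lemma mmul_mident_left:
  assumes "\<And>i j. 2 ^ n \<le> i \<Longrightarrow> X i j = 0"
  shows "mmul n (mident n) X = X"
proof (intro ext)
  fix i j
  have "mmul n (mident n) X i j = (\<Sum>k<2^n. if k = i then X i j else 0)"
    unfolding mmul_def mident_def by (rule sum.cong) auto
  also have "\<dots> = X i j"
    using assms[of i j] by (cases "i < 2 ^ n") auto
  finally show "mmul n (mident n) X i j = X i j" .
qed

lemma mmul_rows_vanish:
  assumes "\<And>j. A i j = 0"
  shows "mmul n A B i j = 0"
  unfolding mmul_def by (simp add: assms)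

definition scalar_commute :: "nat \<Rightarrow> complex \<Rightarrow> cmat \<Rightarrow> cmat \<Rightarrow> bool" where
  "scalar_commute n s A B \<longleftrightarrow> mmul n A B = msmul s (mmul n B A)"

lemma pcommute_iff_scalar_commute:
  "pcommute n a b \<longleftrightarrow> scalar_commute n 1 (pstr_mat a) (pstr_mat b)"
  unfolding pcommute_def scalar_commute_def by simp

lemma panticommute_iff_scalar_commute:
  "panticommute n a b \<longleftrightarrow> scalar_commute n (-1) (pstr_mat a) (pstr_mat b)"
  unfolding panticommute_def scalar_commute_def ..

lemma scalar_commute_refl: "scalar_commute n 1 A A"
  unfolding scalar_commute_def by simp

lemma scalar_commute_sym:
  assumes "scalar_commute n s A B" and "s \<noteq> 0"
  shows "scalar_commute n (inverse s) B A"
  using assms unfolding scalar_commute_def by (simp add: msmul_msmul)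

lemma scalar_commute_mmul_left:
  assumes "scalar_commute n s X Z" and "scalar_commute n t Y Z"
  shows "scalar_commute n (s * t) (mmul n X Y) Z"
proof -
  have "mmul n (mmul n X Y) Z = msmul t (mmul n (mmul n X Z) Y)"
    using assms(2) unfolding scalar_commute_def by (simp add: mmul_assoc mmul_msmul_right)
  also have "\<dots> = msmul (s * t) (mmul n Z (mmul n X Y))"
    using assms(1) unfolding scalar_commute_def
    by (simp add: mmul_assoc mmul_msmul_left msmul_msmul mult.commute)
  finally show ?thesis unfolding scalar_commute_def .
qed

lemma mbracket_anticommuting:
  assumes "scalar_commute n (-1) A B"
  shows "mbracket n (msmul a A) (msmul b B) = msmul (2 * a * b) (mmul n A B)"
proof -
  have "mmul n B A i j = - mmul n A B i j" for i j
    using fun_cong[OF fun_cong[OF assms[unfolded scalar_commute_def]], of i j]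
    by (simp add: msmul_def)
  then show ?thesis
    unfolding mbracket_def mmul_msmul_left mmul_msmul_right by (simp add: msmul_def algebra_simps)
qed

lemma anticommuting_products:
  assumes "scalar_commute n (-1) P B1" "scalar_commute n (-1) P B2" "scalar_commute n (-1) P B3"
    and "scalar_commute n 1 B1 B2" "scalar_commute n 1 B1 B3" "scalar_commute n 1 B2 B3"
  shows "scalar_commute n (-1) (mmul n P B1) B2"
    and "scalar_commute n (-1) (mmul n (mmul n P B1) B2) B3"
    and "scalar_commute n (-1) P (mmul n (mmul n (mmul n P B1) B2) B3)"
proof -
  note P_right = assms(1-3)[THEN scalar_commute_sym, simplified]
  show "scalar_commute n (-1) (mmul n P B1) B2"
    using scalar_commute_mmul_left[OF assms(2,4)] by simp
  show "scalar_commute n (-1) (mmul n (mmul n P B1) B2) B3"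
    using scalar_commute_mmul_left[OF scalar_commute_mmul_left[OF assms(3,5)] assms(6)] by simp
  show "scalar_commute n (-1) P (mmul n (mmul n (mmul n P B1) B2) B3)"
    using scalar_commute_sym[OF scalar_commute_mmul_left[OF scalar_commute_mmul_left[OF
          scalar_commute_mmul_left[OF scalar_commute_refl P_right(1)] P_right(2)] P_right(3)]]
    by simp
qed

lemma sum_lessThan_double:
  "(\<Sum>k<2 * m. f k) = (\<Sum>k<m. f k) + (\<Sum>k<m. f (k + m :: nat))" for f :: "nat \<Rightarrow> 'a::comm_monoid_add"
proof -
  have "(\<Sum>k<2 * m. f k) = (\<Sum>k<m. f k) + (\<Sum>k\<in>{m..<m + m}. f k)"
    by (metis atLeast0LessThan le_add1 mult_2 sum.atLeastLessThan_concat zero_le)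
  also have "(\<Sum>k\<in>{m..<m + m}. f k) = (\<Sum>k<m. f (k + m))"
    using sum.shift_bounds_nat_ivl[of f 0 m m] by (simp add: atLeast0LessThan add.commute)
  finally show ?thesis .
qed

lemma pstr_mat_outside:
  "2 ^ length ps \<le> i \<or> 2 ^ length ps \<le> j \<Longrightarrow> pstr_mat ps i j = 0"
proof (induction ps arbitrary: i j)
  case Nil
  then show ?case by auto
next
  case (Cons p ps)
  let ?m = "2 ^ length ps :: nat"
  from Cons.prems have "2 \<le> i div ?m \<or> 2 \<le> j div ?m"
    by (auto simp: le_div_geq intro: div_greater_zero_iff[THEN iffD2])
  then show ?case by (auto simp: kron_def pmat_def)
qed

lemma pmat_square: "(\<Sum>a<2. pmat p x a * pmat p a y) = (if x = y \<and> x < 2 then 1 else 0)"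
  by (cases p) (auto simp: pmat_def numeral_2_eq_2 lessThan_Suc)

lemma pstr_mat_square: "mmul (length ps) (pstr_mat ps) (pstr_mat ps) = mident (length ps)"
proof (induction ps)
  case Nil
  show ?case by (auto simp: mmul_def mident_def)
next
  case (Cons p ps)
  let ?m = "2 ^ length ps :: nat" and ?Q = "pstr_mat ps"
  have IH: "(\<Sum>b<?m. ?Q i b * ?Q b j) = (if i = j \<and> i < ?m then 1 else 0)" for i j
    using fun_cong[OF fun_cong[OF Cons.IH], of i j] by (simp add: mmul_def mident_def)
  have split: "(i div ?m = j div ?m \<and> i div ?m < 2 \<and> i mod ?m = j mod ?m) \<longleftrightarrow> i = j \<and> i < 2 * ?m"
    for i j :: nat
    by (metis div_mult_mod_eq less_mult_imp_div_less div_less_iff_less_mult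
        mult.commute zero_less_numeral zero_less_power)
  have "mmul (length (p # ps)) (pstr_mat (p # ps)) (pstr_mat (p # ps)) i j
      = (\<Sum>a<2. pmat p (i div ?m) a * pmat p a (j div ?m)) *
        (\<Sum>b<?m. ?Q (i mod ?m) b * ?Q b (j mod ?m))" for i j
  proof -
    have "mmul (length (p # ps)) (pstr_mat (p # ps)) (pstr_mat (p # ps)) i j
      = (\<Sum>k<2 * ?m. pmat p (i div ?m) (k div ?m) * ?Q (i mod ?m) (k mod ?m) *
          (pmat p (k div ?m) (j div ?m) * ?Q (k mod ?m) (j mod ?m)))"
      by (simp add: mmul_def kron_def)
    also have "\<dots> = (\<Sum>a<2. pmat p (i div ?m) a * pmat p a (j div ?m)) *
        (\<Sum>b<?m. ?Q (i mod ?m) b * ?Q b (j mod ?m))"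
      unfolding sum_lessThan_double
      by (simp add: numeral_2_eq_2 lessThan_Suc sum_distrib_left sum.distrib algebra_simps
          flip: sum_distrib_right)
    finally show ?thesis .
  qed
  then show ?case
    unfolding pmat_square IH by (intro ext) (simp add: mident_def split flip: split)
qed

lemma pstr_mat_square_mmul:
  assumes "length ps = n" and "\<And>i j. 2 ^ n \<le> i \<Longrightarrow> X i j = 0"
  shows "mmul n (pstr_mat ps) (mmul n (pstr_mat ps) X) = X"
  using pstr_mat_square[of ps] assms
  by (simp add: mmul_mident_left flip: mmul_assoc)

lemma ispan_pauli: "\<sigma> \<in> P \<Longrightarrow> msmul \<i> (pstr_mat \<sigma>) \<in> ispan P"
  unfolding ispan_def rspan_def
  by (intro CollectI exI[of _ "{msmul \<i> (pstr_mat \<sigma>)}"] exI[of _ "\<lambda>_. 1"]) auto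

lemma ispan_msmul_real:
  assumes "A \<in> ispan P"
  shows "msmul (complex_of_real r) A \<in> ispan P"
proof -
  obtain F c where F: "finite F" "F \<subseteq> (\<lambda>\<sigma>. msmul \<i> (pstr_mat \<sigma>)) ` P"
    "\<forall>i j. A i j = (\<Sum>B\<in>F. complex_of_real (c B) * B i j)"
    using assms unfolding ispan_def rspan_def by blast
  show ?thesis
    unfolding ispan_def rspan_def
    by (intro CollectI exI[of _ F] exI[of _ "\<lambda>B. r * c B"])
      (use F in \<open>simp add: msmul_def sum_distrib_left mult.assoc\<close>)
qed

lemma pauli_cartan_length: "pauli_cartan n K M \<Longrightarrow> \<sigma> \<in> K \<union> M \<Longrightarrow> length \<sigma> = n"
  unfolding pauli_cartan_def pauli_string_def by blast

lemma pauli_cartan_bracket_m_m: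
  "pauli_cartan n K M \<Longrightarrow> A \<in> ispan M \<Longrightarrow> B \<in> ispan M \<Longrightarrow> mbracket n A B \<in> ispan K"
  unfolding pauli_cartan_def by blast

lemma pauli_cartan_bracket_k_m:
  "pauli_cartan n K M \<Longrightarrow> A \<in> ispan K \<Longrightarrow> B \<in> ispan M \<Longrightarrow> mbracket n A B \<in> ispan M"
  unfolding pauli_cartan_def by blast

theorem theoremC2:
  fixes n :: nat and K M :: "pauli list set" and b1 b2 b3 :: "pauli list"
  assumes "pauli_cartan n K M"
    and "b1 \<in> M" and "b2 \<in> M" and "b3 \<in> M"
    and "pcommute n b1 b2" and "pcommute n b1 b3" and "pcommute n b2 b3"
    and "k123 n K b1 b2 b3 \<noteq> {}"
  shows "msmul \<i> (mmul n (mmul n (pstr_mat b1) (pstr_mat b2)) (pstr_mat b3)) \<in> ispan M"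
proof -
  obtain k where k: "k \<in> K" "panticommute n k b1" "panticommute n k b2" "panticommute n k b3"
    using assms(8) unfolding k123_def by blast
  note MM = pauli_cartan_bracket_m_m[OF assms(1)] and KM = pauli_cartan_bracket_k_m[OF assms(1)]
  have "length k = n" and "length b1 = n"
    using pauli_cartan_length[OF assms(1)] k(1) assms(2) by auto
  define P B1 B2 B3 where "P = pstr_mat k" and "B1 = pstr_mat b1" and "B2 = pstr_mat b2"
    and "B3 = pstr_mat b3"
  define Q1 Q2 Q3 where "Q1 = mmul n P B1" and "Q2 = mmul n Q1 B2" and "Q3 = mmul n Q2 B3"
  have iP: "msmul \<i> P \<in> ispan K"
    unfolding P_def using k(1) by (rule ispan_pauli)
  have iB: "msmul \<i> B1 \<in> ispan M" "msmul \<i> B2 \<in> ispan M" "msmul \<i> B3 \<in> ispan M"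
    unfolding B1_def B2_def B3_def using assms(2-4) by (auto intro: ispan_pauli)
  note anti_k = k(2-4)[unfolded panticommute_iff_scalar_commute, folded P_def B1_def B2_def B3_def]
  note comm = assms(5-7)[unfolded pcommute_iff_scalar_commute, folded B1_def B2_def B3_def]
  note anti = anticommuting_products[OF anti_k comm, folded Q1_def Q2_def Q3_def]
  have "msmul (-2) Q1 \<in> ispan M"
    using KM[OF iP iB(1)] by (simp add: mbracket_anticommuting[OF anti_k(1)] mult.assoc Q1_def)
  from MM[OF this iB(2)] have "msmul (-4 * \<i>) Q2 \<in> ispan K"
    by (simp add: mbracket_anticommuting[OF anti(1)] mult.assoc Q2_def)
  from KM[OF this iB(3)] have "msmul 8 Q3 \<in> ispan M"
    by (simp add: mbracket_anticommuting[OF anti(2)] mult.assoc Q3_def)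
  from KM[OF iP this] have "msmul (16 * \<i>) (mmul n P Q3) \<in> ispan M"
    by (simp add: mbracket_anticommuting[OF anti(3)] mult.assoc)
  moreover have "mmul n P Q3 = mmul n (mmul n B1 B2) B3"
    unfolding P_def Q1_def Q2_def Q3_def B1_def
    by (simp add: mmul_assoc pstr_mat_square_mmul \<open>length k = n\<close> mmul_rows_vanish
        pstr_mat_outside \<open>length b1 = n\<close>)
  ultimately have "msmul (16 * \<i>) (mmul n (mmul n B1 B2) B3) \<in> ispan M"
    by simp
  from ispan_msmul_real[OF this, of "1 / 16"] show ?thesis
    by (simp add: msmul_msmul B1_def B2_def B3_def)
qed

end
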